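(* Let $n\ge 11$ and let $G$ be a connected bidegreed graph of order $n$ with maximum degree $n-1$, and let $k=|M(G)|$. Then $$cM_2(G)\le k(n-k)\left((n-1)^2-k^2\right),$$ with equality if and only if $G$ is isomorphic to $K_k+\overline{K}_{n-k}$. Also, the inequality $$cM_2(G)\le \epsilon\, n^2(1-\epsilon)\left((n-1)^2-\epsilon^2n^2\right)$$ holds for some real $\epsilon$ lying between $372/1000$ and $392/1000$.
   Context: All graphs are finite and simple. For a graph $G$ and a vertex $u$, $d_u(G)$ denotes the degree of $u$ in $G$. The complementary second Zagreb index of $G$ is $cM_2(G)=\sum_{uv\in E(G)}\left|(d_u(G))^2-(d_v(G))^2\right|$. $M(G)$ denotes the set of vertices of $G$ having the maximum degree of $G$. A graph is bidegreed if the set of distinct vertex degrees has exactly two elements. $K_m$ is the complete graph on $m$ vertices, $\overline{H}$ is the complement of $H$, and $H_1+H_2$ (the join) is the graph on the disjoint union $V(H_1)\cup V(H_2)$ with edge set $E(H_1)\cup E(H_2)\cup\{h_1h_2: h_1\in V(H_1),h_2\in V(H_2)\}$. *)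

theory Defs
  imports Complex_Main
begin

text \<open>A graph is a pair (vertex set, edge set); edges are 2-element vertex sets.\<close>
type_synonym 'a graph = "'a set \<times> 'a set set"

definition verts :: "'a graph \<Rightarrow> 'a set" where "verts G = fst G"
definition edges :: "'a graph \<Rightarrow> 'a set set" where "edges G = snd G"

definition simple_graph :: "'a graph \<Rightarrow> bool" where
  "simple_graph G \<longleftrightarrow> finite (verts G) \<and>
     (\<forall>e\<in>edges G. \<exists>u v. u \<noteq> v \<and> u \<in> verts G \<and> v \<in> verts G \<and> e = {u, v})"

definition deg :: "'a graph \<Rightarrow> 'a \<Rightarrow> nat" where
  "deg G u = card {e \<in> edges G. u \<in> e}"

definition connected_graph :: "'a graph \<Rightarrow> bool" where
  "connected_graph G \<longleftrightarrow> (\<forall>u\<in>verts G. \<forall>v\<in>verts G. \<exists>p. p \<noteq> [] \<and> hd p = u \<and> last p = v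
      \<and> set p \<subseteq> verts G \<and> (\<forall>i. Suc i < length p \<longrightarrow> {p ! i, p ! Suc i} \<in> edges G))"

definition bidegreed :: "'a graph \<Rightarrow> bool" where
  "bidegreed G \<longleftrightarrow> card (deg G ` verts G) = 2"

definition max_degree :: "'a graph \<Rightarrow> nat" where
  "max_degree G = Max (deg G ` verts G)"

definition max_deg_verts :: "'a graph \<Rightarrow> 'a set" where
  "max_deg_verts G = {v \<in> verts G. deg G v = max_degree G}"

text \<open>Complementary second Zagreb index: for an edge e = {u,v}, the term
  |d_u^2 - d_v^2| equals max minus min of the squared degrees over e.\<close>
definition cM2 :: "'a graph \<Rightarrow> int" where
  "cM2 G = (\<Sum>e\<in>edges G. Max ((\<lambda>x. int (deg G x) ^ 2) ` e) - Min ((\<lambda>x. int (deg G x) ^ 2) ` e))"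

definition complete_graph :: "nat \<Rightarrow> nat graph" where
  "complete_graph m = ({0..<m}, {{i, j} | i j. i < m \<and> j < m \<and> i \<noteq> j})"

definition complement :: "'a graph \<Rightarrow> 'a graph" where
  "complement H = (verts H, {{u, v} | u v. u \<in> verts H \<and> v \<in> verts H \<and> u \<noteq> v} - edges H)"

definition join :: "'a graph \<Rightarrow> 'b graph \<Rightarrow> ('a + 'b) graph" where
  "join H1 H2 = (Inl ` verts H1 \<union> Inr ` verts H2,
     (image Inl) ` edges H1 \<union> (image Inr) ` edges H2 \<union>
     {{Inl a, Inr b} | a b. a \<in> verts H1 \<and> b \<in> verts H2})"

definition graph_iso :: "'a graph \<Rightarrow> 'b graph \<Rightarrow> bool" where
  "graph_iso G H \<longleftrightarrow> (\<exists>f. bij_betw f (verts G) (verts H) \<and>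
     (\<forall>u\<in>verts G. \<forall>v\<in>verts G. {u, v} \<in> edges G \<longleftrightarrow> {f u, f v} \<in> edges H))"

end

(* A vertex of degree n - 1 is adjacent to every other vertex. Hence every vertex outside the set M
   of maximum-degree vertices has the other degree d and is adjacent to all k = |M| vertices of M, so
   k <= d < n - 1. Only the k (n - k) edges between M and its complement contribute to cM2, each with
   (n - 1)^2 - d^2; thus cM2 = k (n - k) ((n - 1)^2 - d^2) <= k (n - k) ((n - 1)^2 - k^2), with
   equality iff d = k, i.e. iff the vertices outside M see exactly M, which makes G the complete
   split graph K_k + co-K_(n-k).
   For the second bound, f(x) = x (n - x) ((n - 1)^2 - x^2) increases on [0, 0.372 n] and decreases
   on [0.392 n, n - 1] once n >= 11, so f(k) <= f(eps n) for some eps in [0.372, 0.392]. *)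

theory Submission
  imports Defs
begin

definition nbr :: "'a graph \<Rightarrow> 'a \<Rightarrow> 'a set" where
  "nbr G u = {v \<in> verts G. {u, v} \<in> edges G}"

lemma simple_graph_edgeE:
  assumes "simple_graph G" "e \<in> edges G"
  obtains u v where "u \<noteq> v" "u \<in> verts G" "v \<in> verts G" "e = {u, v}"
  using assms unfolding simple_graph_def by blast

lemma simple_graph_finite_verts: "simple_graph G \<Longrightarrow> finite (verts G)"
  unfolding simple_graph_def by blast

lemma simple_graph_finite_edges:
  assumes "simple_graph G"
  shows "finite (edges G)"
proof -
  have "edges G \<subseteq> Pow (verts G)"
    by (blast elim: simple_graph_edgeE[OF assms])
  then show ?thesis
    using simple_graph_finite_verts[OF assms] by (simp add: finite_subset)
qed

lemma simple_graph_no_loop: "simple_graph G \<Longrightarrow> {u} \<notin> edges G"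
  by (metis doubleton_eq_iff insert_absorb2 simple_graph_edgeE)

lemma nbr_subset: "simple_graph G \<Longrightarrow> nbr G u \<subseteq> verts G - {u}"
  using simple_graph_no_loop by (fastforce simp: nbr_def)

lemma deg_eq_card_nbr:
  assumes "simple_graph G"
  shows "deg G u = card (nbr G u)"
proof -
  have "bij_betw (\<lambda>v. {u, v}) (nbr G u) {e \<in> edges G. u \<in> e}"
  proof (rule bij_betwI')
    show "{u, v} = {u, w} \<longleftrightarrow> v = w" for v w
      by (metis doubleton_eq_iff)
    show "{u, v} \<in> {e \<in> edges G. u \<in> e}" if "v \<in> nbr G u" for v
      using that by (simp add: nbr_def)
    show "\<exists>v\<in>nbr G u. e = {u, v}" if "e \<in> {e \<in> edges G. u \<in> e}" for e
    proof -
      have e: "e \<in> edges G" "u \<in> e"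
        using that by auto
      obtain a b where "a \<in> verts G" "b \<in> verts G" "e = {a, b}"
        by (rule simple_graph_edgeE[OF assms e(1)])
      with e show ?thesis
        by (auto simp: nbr_def insert_commute)
    qed
  qed
  then show ?thesis
    unfolding deg_def by (simp add: bij_betw_same_card)
qed

lemma deg_eq_card_verts_iff:
  assumes G: "simple_graph G" and "u \<in> verts G"
  shows "deg G u = card (verts G) - 1 \<longleftrightarrow> nbr G u = verts G - {u}"
proof -
  have fin: "finite (verts G - {u})"
    using simple_graph_finite_verts[OF G] by simp
  have card: "card (verts G - {u}) = card (verts G) - 1"
    using assms by (simp add: simple_graph_finite_verts)
  show ?thesis
  proof
    assume "deg G u = card (verts G) - 1"
    then have "card (nbr G u) = card (verts G - {u})"
      using card by (simp add: deg_eq_card_nbr[OF G])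
    then show "nbr G u = verts G - {u}"
      by (rule card_subset_eq[OF fin nbr_subset[OF G]])
  qed (simp add: card deg_eq_card_nbr[OF G])
qed

definition cut_edges :: "'a graph \<Rightarrow> 'a set \<Rightarrow> 'a set set" where
  "cut_edges G A = {e \<in> edges G. e \<inter> A \<noteq> {} \<and> e - A \<noteq> {}}"

lemma cM2_two_degrees:
  assumes G: "simple_graph G" and "b \<le> a"
    and deg_in: "\<And>u. u \<in> A \<Longrightarrow> deg G u = a"
    and deg_out: "\<And>u. u \<in> verts G - A \<Longrightarrow> deg G u = b"
  shows "cM2 G = int (card (cut_edges G A)) * (int a ^ 2 - int b ^ 2)"
proof -
  let ?sq = "\<lambda>x. int (deg G x) ^ 2"
  have edge_term: "Max (?sq ` e) - Min (?sq ` e) = (if e \<in> cut_edges G A then int a ^ 2 - int b ^ 2 else 0)"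
    if e_edge: "e \<in> edges G" for e
  proof -
    obtain u v where "u \<noteq> v" "u \<in> verts G" "v \<in> verts G" and e: "e = {u, v}"
      by (rule simple_graph_edgeE[OF G e_edge])
    moreover have "int b ^ 2 \<le> int a ^ 2"
      using \<open>b \<le> a\<close> by (simp add: power_mono)
    ultimately show ?thesis
      using e_edge by (cases "u \<in> A"; cases "v \<in> A") (auto simp: cut_edges_def deg_in deg_out)
  qed
  have "cM2 G = (\<Sum>e\<in>edges G. if e \<in> cut_edges G A then int a ^ 2 - int b ^ 2 else 0)"
    unfolding cM2_def by (rule sum.cong) (simp_all add: edge_term)
  also have "\<dots> = (\<Sum>e\<in>edges G \<inter> cut_edges G A. int a ^ 2 - int b ^ 2)"
    using simple_graph_finite_edges[OF G] by (rule sum.inter_restrict[symmetric])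
  also have "edges G \<inter> cut_edges G A = cut_edges G A"
    by (auto simp: cut_edges_def)
  finally show ?thesis
    by simp
qed

lemma card_cut_edges_complete:
  assumes G: "simple_graph G"
    and adj: "\<And>u v. u \<in> A \<Longrightarrow> v \<in> verts G - A \<Longrightarrow> {u, v} \<in> edges G"
  shows "card (cut_edges G A) = card A * card (verts G - A)"
proof -
  have "cut_edges G A = (\<lambda>(u, v). {u, v}) ` (A \<times> (verts G - A))"
  proof
    show "cut_edges G A \<subseteq> (\<lambda>(u, v). {u, v}) ` (A \<times> (verts G - A))"
    proof
      fix e assume e: "e \<in> cut_edges G A"
      then have "e \<in> edges G"
        by (simp add: cut_edges_def)
      then obtain u v where "u \<in> verts G" "v \<in> verts G" "e = {u, v}"
        by (rule simple_graph_edgeE[OF G])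
      with e show "e \<in> (\<lambda>(u, v). {u, v}) ` (A \<times> (verts G - A))"
        by (auto simp: cut_edges_def insert_commute)
    qed
    show "(\<lambda>(u, v). {u, v}) ` (A \<times> (verts G - A)) \<subseteq> cut_edges G A"
      using adj by (auto simp: cut_edges_def)
  qed
  moreover have "inj_on (\<lambda>(u, v). {u, v}) (A \<times> (verts G - A))"
    by (auto simp: inj_on_def doubleton_eq_iff)
  ultimately show ?thesis
    by (simp add: card_image card_cartesian_product)
qed

definition complete_split :: "'a graph \<Rightarrow> 'a set \<Rightarrow> bool" where
  "complete_split G K \<longleftrightarrow> K \<subseteq> verts G \<and>
     (\<forall>u\<in>verts G. \<forall>v\<in>verts G. {u, v} \<in> edges G \<longleftrightarrow> u \<noteq> v \<and> (u \<in> K \<or> v \<in> K))"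

lemma verts_join_complete_co_complete:
  "verts (join (complete_graph k) (complement (complete_graph m))) = Inl ` {0..<k} \<union> Inr ` {0..<m}"
  by (simp add: join_def verts_def complement_def complete_graph_def)

lemma edges_join_complete_co_complete:
  "edges (join (complete_graph k) (complement (complete_graph m))) =
     (image Inl) ` {{i, j} | i j. i < k \<and> j < k \<and> i \<noteq> j} \<union> {{Inl a, Inr b} | a b. a < k \<and> b < m}"
  by (auto simp: join_def verts_def edges_def complement_def complete_graph_def)

lemma complete_split_join:
  "complete_split (join (complete_graph k) (complement (complete_graph m))) (Inl ` {0..<k})"
  unfolding complete_split_def verts_join_complete_co_complete edges_join_complete_co_complete
proof (intro conjI ballI)
  have Inl_pair: "{Inl i, Inl j :: nat + nat} = Inl ` {i, j}" for i j :: nat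
    by simp
  have pair_edge: "{i, j} \<in> {{i, j} | i j. i < k \<and> j < k \<and> i \<noteq> j} \<longleftrightarrow> i \<noteq> j"
    if "i < k" "j < k" for i j :: nat
    using that by (auto simp: doubleton_eq_iff)
  have inj: "inj (image Inl :: nat set \<Rightarrow> (nat + nat) set)"
    by (simp add: inj_def inj_image_eq_iff)
  have Inl_edge: "{Inl i, Inl j :: nat + nat} \<in> (image Inl) ` {{i, j} | i j. i < k \<and> j < k \<and> i \<noteq> j}
      \<longleftrightarrow> i \<noteq> j" if "i < k" "j < k" for i j :: nat
    unfolding Inl_pair inj_image_mem_iff[OF inj] using that by (rule pair_edge)
  have Inl_not_cross: "{Inl i, Inl j} \<notin> {{Inl a, Inr b} | a b. a < k \<and> b < m}" for i j :: nat
    by (auto simp: doubleton_eq_iff)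
  have Inr_not_clique: "{Inr j, y} \<notin> (image Inl) ` {{i, j} | i j. i < k \<and> j < k \<and> i \<noteq> j}" for j :: nat and y
    by auto
  have Inr_not_cross: "{Inr i, Inr j} \<notin> {{Inl a, Inr b} | a b. a < k \<and> b < m}" for i j :: nat
    by (auto simp: doubleton_eq_iff)
  fix x y :: "nat + nat"
  assume "x \<in> Inl ` {0..<k} \<union> Inr ` {0..<m}" "y \<in> Inl ` {0..<k} \<union> Inr ` {0..<m}"
  then consider (LL) i j where "x = Inl i" "y = Inl j" "i < k" "j < k"
    | (LR) i j where "x = Inl i" "y = Inr j" "i < k" "j < m"
    | (RL) i j where "x = Inr j" "y = Inl i" "i < k" "j < m"
    | (RR) i j where "x = Inr i" "y = Inr j"
    by auto
  then show "{x, y} \<in> (image Inl) ` {{i, j} | i j. i < k \<and> j < k \<and> i \<noteq> j}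
       \<union> {{Inl a, Inr b} | a b. a < k \<and> b < m}
      \<longleftrightarrow> x \<noteq> y \<and> (x \<in> Inl ` {0..<k} \<or> y \<in> Inl ` {0..<k})"
  proof cases
    case LL
    then show ?thesis
      by (simp add: Inl_edge Inl_not_cross)
  next
    case LR
    then have "{x, y} \<in> {{Inl a, Inr b} | a b. a < k \<and> b < m}"
      by blast
    with LR show ?thesis
      by simp
  next
    case RL
    then have "{x, y} \<in> {{Inl a, Inr b} | a b. a < k \<and> b < m}"
      by (blast intro: insert_commute)
    with RL show ?thesis
      by simp
  next
    case RR
    then have "{x, y} \<notin> (image Inl) ` {{i, j} | i j. i < k \<and> j < k \<and> i \<noteq> j}
        \<union> {{Inl a, Inr b} | a b. a < k \<and> b < m}"
      using Inr_not_clique Inr_not_cross by blast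
    moreover have "x \<notin> Inl ` {0..<k}" "y \<notin> Inl ` {0..<k}"
      using RR by auto
    ultimately show ?thesis
      by blast
  qed
qed simp

lemma complete_split_graph_iso:
  assumes "graph_iso G H" "complete_split H K"
  obtains L where "complete_split G L" "card L = card K"
proof -
  obtain f where f: "bij_betw f (verts G) (verts H)"
    and adj: "\<And>u v. u \<in> verts G \<Longrightarrow> v \<in> verts G \<Longrightarrow> {u, v} \<in> edges G \<longleftrightarrow> {f u, f v} \<in> edges H"
    using assms(1) unfolding graph_iso_def by blast
  define L where "L = {u \<in> verts G. f u \<in> K}"
  have "K \<subseteq> verts H"
    using assms(2) by (simp add: complete_split_def)
  then have "bij_betw f L K"
    using f unfolding L_def bij_betw_def inj_on_def by auto
  moreover have "complete_split G L"
    unfolding complete_split_def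
  proof (intro conjI ballI)
    fix u v assume uv: "u \<in> verts G" "v \<in> verts G"
    then have "f u \<in> verts H" "f v \<in> verts H" "f u = f v \<longleftrightarrow> u = v"
      using f by (auto simp: bij_betw_def inj_on_def)
    then show "{u, v} \<in> edges G \<longleftrightarrow> u \<noteq> v \<and> (u \<in> L \<or> v \<in> L)"
      using assms(2) adj[OF uv] uv unfolding complete_split_def L_def by auto
  qed (simp add: L_def)
  ultimately show thesis
    using that bij_betw_same_card by blast
qed

lemma graph_iso_join_if_complete_split:
  assumes "finite (verts G)" "complete_split G K"
  shows "graph_iso G (join (complete_graph (card K)) (complement (complete_graph (card (verts G - K)))))"
    (is "graph_iso G ?H")
proof -
  have K: "K \<subseteq> verts G"
    and G_adj: "\<And>u v. u \<in> verts G \<Longrightarrow> v \<in> verts G \<Longrightarrow>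
      {u, v} \<in> edges G \<longleftrightarrow> u \<noteq> v \<and> (u \<in> K \<or> v \<in> K)"
    using assms(2) by (simp_all add: complete_split_def)
  have H_adj: "\<And>x y. x \<in> verts ?H \<Longrightarrow> y \<in> verts ?H \<Longrightarrow>
      {x, y} \<in> edges ?H \<longleftrightarrow> x \<noteq> y \<and> (x \<in> Inl ` {0..<card K} \<or> y \<in> Inl ` {0..<card K})"
    using complete_split_join unfolding complete_split_def by blast
  obtain gK where gK: "bij_betw gK K {0..<card K}"
    using ex_bij_betw_finite_nat finite_subset[OF K assms(1)] by blast
  obtain gO where gO: "bij_betw gO (verts G - K) {0..<card (verts G - K)}"
    using ex_bij_betw_finite_nat assms(1) by blast
  define f where "f v = (if v \<in> K then Inl (gK v) else Inr (gO v))" for v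
  have "bij_betw (Inl \<circ> gK) K (Inl ` {0..<card K})"
    by (rule bij_betw_trans[OF gK]) (simp add: bij_betw_imageI)
  then have "bij_betw f K (Inl ` {0..<card K})"
    by (rule bij_betw_cong[THEN iffD1, rotated]) (simp add: f_def)
  moreover have "bij_betw (Inr \<circ> gO) (verts G - K) (Inr ` {0..<card (verts G - K)})"
    by (rule bij_betw_trans[OF gO]) (simp add: bij_betw_imageI)
  then have "bij_betw f (verts G - K) (Inr ` {0..<card (verts G - K)})"
    by (rule bij_betw_cong[THEN iffD1, rotated]) (simp add: f_def)
  moreover have "Inl ` {0..<card K} \<inter> Inr ` {0..<card (verts G - K)} = {}"
    by auto
  ultimately have "bij_betw f (K \<union> (verts G - K)) (verts ?H)"
    unfolding verts_join_complete_co_complete by (rule bij_betw_combine)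
  moreover have "K \<union> (verts G - K) = verts G"
    using K by blast
  ultimately have f: "bij_betw f (verts G) (verts ?H)"
    by simp
  have "{u, v} \<in> edges G \<longleftrightarrow> {f u, f v} \<in> edges ?H" if "u \<in> verts G" "v \<in> verts G" for u v
  proof -
    have "f u = f v \<longleftrightarrow> u = v" "f u \<in> verts ?H" "f v \<in> verts ?H"
      using f that by (auto simp: bij_betw_def inj_on_def)
    moreover have "f w \<in> Inl ` {0..<card K} \<longleftrightarrow> w \<in> K" for w
      using gK by (auto simp: f_def bij_betw_def)
    ultimately show ?thesis
      using G_adj[OF that] H_adj by simp
  qed
  with f show ?thesis
    unfolding graph_iso_def by blast
qed

lemma deg_complete_split:
  assumes G: "simple_graph G" and "complete_split G K" "u \<in> verts G"
  shows "deg G u = (if u \<in> K then card (verts G) - 1 else card K)"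
proof -
  have "nbr G u = (if u \<in> K then verts G - {u} else K)"
    using assms(2,3) by (auto simp: nbr_def complete_split_def)
  then show ?thesis
    using assms(3) simple_graph_finite_verts[OF G] by (simp add: deg_eq_card_nbr[OF G])
qed

locale bidegreed_universal =
  fixes G :: "'a graph" and n :: nat
  assumes simple: "simple_graph G" and bideg: "bidegreed G"
    and card_verts: "card (verts G) = n" and max_deg: "max_degree G = n - 1"
begin

definition low_deg :: nat where
  "low_deg = Min (deg G ` verts G)"

lemma finite_verts: "finite (verts G)"
  using simple by (rule simple_graph_finite_verts)

lemma deg_image: "deg G ` verts G = {n - 1, low_deg}"
  and low_deg_less: "low_deg < n - 1"
proof -
  obtain x y where xy: "deg G ` verts G = {x, y}" "x \<noteq> y"
    using bideg unfolding bidegreed_def by (meson card_2_iff)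
  then have "max_degree G = max x y" "low_deg = min x y"
    by (simp_all add: max_degree_def low_deg_def)
  then show "deg G ` verts G = {n - 1, low_deg}" "low_deg < n - 1"
    using xy max_deg by (auto simp: max_def min_def)
qed

lemma max_deg_verts_eq: "max_deg_verts G = {u \<in> verts G. deg G u = n - 1}"
  by (simp add: max_deg_verts_def max_deg)

lemma deg_not_max: "u \<in> verts G - max_deg_verts G \<Longrightarrow> deg G u = low_deg"
  using deg_image by (auto simp: max_deg_verts_eq)

lemma max_deg_vert_adjacent:
  assumes "u \<in> max_deg_verts G" "v \<in> verts G" "v \<noteq> u"
  shows "{u, v} \<in> edges G"
proof -
  have "u \<in> verts G" "deg G u = card (verts G) - 1"
    using assms(1) card_verts by (simp_all add: max_deg_verts_eq)
  then have "nbr G u = verts G - {u}"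
    using deg_eq_card_verts_iff[OF simple] by blast
  then show ?thesis
    using assms(2,3) by (auto simp: nbr_def)
qed

lemma max_deg_verts_subset_nbr:
  assumes "u \<in> verts G - max_deg_verts G"
  shows "max_deg_verts G \<subseteq> nbr G u"
  using assms max_deg_vert_adjacent by (fastforce simp: nbr_def insert_commute max_deg_verts_eq)

lemma exists_not_max_deg: obtains u where "u \<in> verts G - max_deg_verts G"
  using deg_image low_deg_less by (force simp: max_deg_verts_eq)

lemma card_max_deg_verts_le_low_deg: "card (max_deg_verts G) \<le> low_deg"
proof -
  obtain u where u: "u \<in> verts G - max_deg_verts G"
    by (rule exists_not_max_deg)
  have "finite (nbr G u)"
    using finite_verts by (simp add: nbr_def)
  then have "card (max_deg_verts G) \<le> card (nbr G u)"
    using max_deg_verts_subset_nbr[OF u] by (rule card_mono)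
  then show ?thesis
    using deg_not_max[OF u] by (simp add: deg_eq_card_nbr[OF simple])
qed

lemma card_max_deg_verts_bounds: "0 < card (max_deg_verts G)" "card (max_deg_verts G) < n"
proof -
  have "n - 1 \<in> deg G ` verts G"
    using deg_image by simp
  then have "max_deg_verts G \<noteq> {}"
    by (auto simp: max_deg_verts_eq)
  then show "0 < card (max_deg_verts G)"
    using finite_verts by (simp add: max_deg_verts_def card_gt_0_iff)
  obtain u where "u \<in> verts G - max_deg_verts G"
    by (rule exists_not_max_deg)
  then have "max_deg_verts G \<subset> verts G"
    by (auto simp: max_deg_verts_def)
  then show "card (max_deg_verts G) < n"
    using finite_verts card_verts by (metis psubset_card_mono)
qed

lemma card_not_max_deg_verts: "card (verts G - max_deg_verts G) = n - card (max_deg_verts G)"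
  using finite_verts card_verts by (simp add: card_Diff_subset max_deg_verts_def)

lemma cM2_eq:
  "cM2 G = int (card (max_deg_verts G)) * (int n - int (card (max_deg_verts G)))
     * ((int n - 1) ^ 2 - int low_deg ^ 2)"
proof -
  have "cM2 G = int (card (cut_edges G (max_deg_verts G))) * (int (n - 1) ^ 2 - int low_deg ^ 2)"
    using low_deg_less deg_not_max
    by (intro cM2_two_degrees[OF simple]) (auto simp: max_deg_verts_eq)
  also have "card (cut_edges G (max_deg_verts G))
      = card (max_deg_verts G) * card (verts G - max_deg_verts G)"
    using max_deg_vert_adjacent
    by (intro card_cut_edges_complete[OF simple]) auto
  also note card_not_max_deg_verts
  finally show ?thesis
    using card_max_deg_verts_bounds by (simp add: of_nat_diff)
qed

lemma complete_split_iff: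
  "complete_split G (max_deg_verts G) \<longleftrightarrow> low_deg = card (max_deg_verts G)"
proof
  assume "complete_split G (max_deg_verts G)"
  moreover obtain u where "u \<in> verts G - max_deg_verts G"
    by (rule exists_not_max_deg)
  ultimately show "low_deg = card (max_deg_verts G)"
    using deg_complete_split[OF simple] deg_not_max by fastforce
next
  assume low: "low_deg = card (max_deg_verts G)"
  have nbr_eq: "nbr G u = max_deg_verts G" if u: "u \<in> verts G - max_deg_verts G" for u
  proof -
    have "finite (nbr G u)"
      using finite_verts by (simp add: nbr_def)
    then show ?thesis
      using max_deg_verts_subset_nbr[OF u] deg_not_max[OF u] low
      by (metis card_subset_eq deg_eq_card_nbr[OF simple])
  qed
  show "complete_split G (max_deg_verts G)"
    unfolding complete_split_def
  proof (intro conjI ballI)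
    fix u v assume "u \<in> verts G" "v \<in> verts G"
    then show "{u, v} \<in> edges G \<longleftrightarrow> u \<noteq> v \<and> (u \<in> max_deg_verts G \<or> v \<in> max_deg_verts G)"
      using nbr_eq max_deg_vert_adjacent simple_graph_no_loop[OF simple]
      by (auto simp: nbr_def insert_commute)
  qed (simp add: max_deg_verts_def)
qed

lemma graph_iso_join_iff:
  "graph_iso G (join (complete_graph (card (max_deg_verts G)))
                     (complement (complete_graph (n - card (max_deg_verts G)))))
   \<longleftrightarrow> low_deg = card (max_deg_verts G)"
proof
  assume "graph_iso G (join (complete_graph (card (max_deg_verts G)))
                         (complement (complete_graph (n - card (max_deg_verts G)))))"
  then obtain L where L: "complete_split G L"
    and "card L = card (Inl ` {0..<card (max_deg_verts G)} :: (nat + nat) set)"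
    using complete_split_join by (rule complete_split_graph_iso)
  then have card_L: "card L = card (max_deg_verts G)"
    by (simp add: card_image)
  obtain u where u: "u \<in> verts G - max_deg_verts G"
    by (rule exists_not_max_deg)
  then show "low_deg = card (max_deg_verts G)"
    using deg_complete_split[OF simple L] deg_not_max[OF u] low_deg_less card_L card_verts
    by (auto split: if_splits)
next
  assume "low_deg = card (max_deg_verts G)"
  then show "graph_iso G (join (complete_graph (card (max_deg_verts G)))
                             (complement (complete_graph (n - card (max_deg_verts G)))))"
    using graph_iso_join_if_complete_split[OF finite_verts, of "max_deg_verts G"]
      complete_split_iff card_not_max_deg_verts
    by simp
qed

lemma cM2_le_bound:
  "cM2 G \<le> int (card (max_deg_verts G)) * (int n - int (card (max_deg_verts G)))
     * ((int n - 1) ^ 2 - int (card (max_deg_verts G)) ^ 2)"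
  and cM2_eq_bound_iff:
  "cM2 G = int (card (max_deg_verts G)) * (int n - int (card (max_deg_verts G)))
     * ((int n - 1) ^ 2 - int (card (max_deg_verts G)) ^ 2)
   \<longleftrightarrow> low_deg = card (max_deg_verts G)"
proof -
  have pos: "0 < int (card (max_deg_verts G)) * (int n - int (card (max_deg_verts G)))"
    using card_max_deg_verts_bounds by simp
  have "int (card (max_deg_verts G)) ^ 2 \<le> int low_deg ^ 2"
    using card_max_deg_verts_le_low_deg by (simp add: power_mono)
  then show "cM2 G \<le> int (card (max_deg_verts G)) * (int n - int (card (max_deg_verts G)))
     * ((int n - 1) ^ 2 - int (card (max_deg_verts G)) ^ 2)"
    unfolding cM2_eq using pos by (intro mult_left_mono) auto
  show "cM2 G = int (card (max_deg_verts G)) * (int n - int (card (max_deg_verts G)))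
     * ((int n - 1) ^ 2 - int (card (max_deg_verts G)) ^ 2)
   \<longleftrightarrow> low_deg = card (max_deg_verts G)"
    unfolding cM2_eq using card_max_deg_verts_bounds by auto
qed

end

(* cM2 of K_x + co-K_(n-x), as a function of x *)
definition zagreb_profile :: "real \<Rightarrow> real \<Rightarrow> real" where
  "zagreb_profile n x = x * (n - x) * ((n - 1) ^ 2 - x ^ 2)"

lemma zagreb_profile_has_derivative:
  "(zagreb_profile n has_real_derivative (n - 1) ^ 2 * (n - 2 * x) - x ^ 2 * (3 * n - 4 * x)) (at x)"
proof -
  have "zagreb_profile n = (\<lambda>x. n * (n - 1) ^ 2 * x - (n - 1) ^ 2 * x ^ 2 - n * x ^ 3 + x ^ 4)"
    by (rule ext) (simp add: zagreb_profile_def power2_eq_square power3_eq_cube power4_eq_xxxx algebra_simps)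
  then show ?thesis
    by (auto intro!: derivative_eq_intros simp: power2_eq_square power3_eq_cube algebra_simps)
qed

lemma zagreb_profile_scaled:
  "zagreb_profile n (\<epsilon> * n) = \<epsilon> * n ^ 2 * (1 - \<epsilon>) * ((n - 1) ^ 2 - \<epsilon> ^ 2 * n ^ 2)"
  by (simp add: zagreb_profile_def power2_eq_square algebra_simps)

lemma continuous_on_zagreb_profile: "continuous_on S (zagreb_profile n)"
  unfolding zagreb_profile_def by (intro continuous_intros)

lemma zagreb_profile_deriv_nonneg:
  fixes n x :: real
  assumes "n \<ge> 11" "0 \<le> x" "x \<le> 372/1000 * n"
  shows "0 \<le> (n - 1) ^ 2 * (n - 2 * x) - x ^ 2 * (3 * n - 4 * x)"
proof -
  define y where "y = 372/1000 * n"
  have "y ^ 2 * (3 * n - 4 * y) - x ^ 2 * (3 * n - 4 * x)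
      = (y - x) * (2 * x * (n - 2 * x) + 2 * y * (n - 2 * y) + x * (n - 2 * y) + y * (n - 2 * x))"
    by (simp add: power2_eq_square algebra_simps)
  also have "\<dots> \<ge> 0"
    using assms by (intro mult_nonneg_nonneg add_nonneg_nonneg) (auto simp: y_def)
  finally have "x ^ 2 * (3 * n - 4 * x) \<le> y ^ 2 * (3 * n - 4 * y)"
    by simp
  \<comment> \<open>\<open>n \<ge> 11\<close> enters only here, as \<open>n - 1 \<ge> 10/11 * n\<close>\<close>
  moreover have "(10/11 * n) ^ 2 * (n - 2 * y) \<le> (n - 1) ^ 2 * (n - 2 * x)"
    using assms by (intro mult_mono power_mono) (auto simp: y_def)
  moreover have "(10/11 * n) ^ 2 * (n - 2 * y) - y ^ 2 * (3 * n - 4 * y)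
      = n ^ 3 * (256/1000 * 100/121 - (372/1000) ^ 2 * (3 - 4 * 372/1000))"
    by (simp add: y_def power2_eq_square power3_eq_cube algebra_simps)
  moreover have "n ^ 3 * (256/1000 * 100/121 - (372/1000) ^ 2 * (3 - 4 * 372/1000)) \<ge> 0"
    using assms by (simp add: power2_eq_square)
  ultimately show ?thesis
    by linarith
qed

lemma zagreb_profile_deriv_nonpos:
  fixes n x :: real
  assumes "n \<ge> 11" "392/1000 * n \<le> x" "x \<le> n - 1"
  shows "(n - 1) ^ 2 * (n - 2 * x) - x ^ 2 * (3 * n - 4 * x) \<le> 0"
proof (cases "2 * x \<le> n")
  case True
  have "0 \<le> n ^ 2 * (4 * (392/1000) ^ 2 + 392/1000 - 1)"
    by (simp add: power2_eq_square)
  also have "\<dots> = 4 * (392/1000 * n) ^ 2 + n * (392/1000 * n) - n ^ 2"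
    by (simp add: power2_eq_square algebra_simps)
  also have "\<dots> \<le> 4 * x ^ 2 + n * x - n ^ 2"
    using assms by (intro diff_mono add_mono mult_left_mono power_mono) auto
  finally have "(x - n) * (4 * x ^ 2 + n * x - n ^ 2) \<le> 0"
    using assms by (intro mult_nonpos_nonneg) auto
  moreover have "n ^ 2 * (n - 2 * x) - x ^ 2 * (3 * n - 4 * x) = (x - n) * (4 * x ^ 2 + n * x - n ^ 2)"
    by (simp add: power2_eq_square algebra_simps)
  moreover have "(n - 1) ^ 2 * (n - 2 * x) \<le> n ^ 2 * (n - 2 * x)"
    using assms True by (intro mult_right_mono power_mono) auto
  ultimately show ?thesis
    by linarith
next
  case False
  have "x ^ 2 * (2 * x - n) \<le> (n - 1) ^ 2 * (2 * x - n)"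
    using assms False by (intro mult_right_mono power_mono) auto
  moreover have "x ^ 2 * (4 * x - 3 * n) \<le> x ^ 2 * (2 * x - n)"
    using assms by (intro mult_left_mono) auto
  ultimately show ?thesis
    by (simp add: algebra_simps)
qed

lemma zagreb_profile_le_scaled:
  fixes n x :: real
  assumes "n \<ge> 11" "0 \<le> x" "x \<le> n - 1"
  obtains \<epsilon> where "372/1000 \<le> \<epsilon>" "\<epsilon> \<le> 392/1000" "zagreb_profile n x \<le> zagreb_profile n (\<epsilon> * n)"
proof -
  consider "x < 372/1000 * n" | "392/1000 * n < x" | "372/1000 * n \<le> x" "x \<le> 392/1000 * n"
    by linarith
  then show thesis
  proof cases
    case 1
    have "zagreb_profile n x \<le> zagreb_profile n (372/1000 * n)"
      using 1 assms zagreb_profile_has_derivative zagreb_profile_deriv_nonneg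
      by (intro DERIV_nonneg_imp_increasing_open[OF _ _ continuous_on_zagreb_profile]) force+
    then show thesis
      by (rule that[rotated 2]) simp_all
  next
    case 2
    have "zagreb_profile n x \<le> zagreb_profile n (392/1000 * n)"
      using 2 assms zagreb_profile_has_derivative zagreb_profile_deriv_nonpos
      by (intro DERIV_nonpos_imp_decreasing_open[OF _ _ continuous_on_zagreb_profile]) force+
    then show thesis
      by (rule that[rotated 2]) simp_all
  next
    case 3
    then show thesis
      using assms by (intro that[of "x / n"]) (simp_all add: field_simps)
  qed
qed

theorem proposition4:
  fixes G :: "'a graph" and n k :: nat
  assumes "simple_graph G" and "connected_graph G" and "bidegreed G"
    and "card (verts G) = n" and "n \<ge> 11"
    and "max_degree G = n - 1"
    and "k = card (max_deg_verts G)"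
  shows "cM2 G \<le> int k * (int n - int k) * ((int n - 1) ^ 2 - int k ^ 2)
    \<and> (cM2 G = int k * (int n - int k) * ((int n - 1) ^ 2 - int k ^ 2)
         \<longleftrightarrow> graph_iso G (join (complete_graph k) (complement (complete_graph (n - k)))))
    \<and> (\<exists>\<epsilon>::real. 372/1000 \<le> \<epsilon> \<and> \<epsilon> \<le> 392/1000 \<and>
         real_of_int (cM2 G) \<le> \<epsilon> * real n ^ 2 * (1 - \<epsilon>) * ((real n - 1) ^ 2 - \<epsilon> ^ 2 * real n ^ 2))"
proof -
  interpret bidegreed_universal G n
    using assms by unfold_locales
  have bound: "cM2 G \<le> int k * (int n - int k) * ((int n - 1) ^ 2 - int k ^ 2)"
    using cM2_le_bound assms(7) by simp
  have extremal: "cM2 G = int k * (int n - int k) * ((int n - 1) ^ 2 - int k ^ 2)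
      \<longleftrightarrow> graph_iso G (join (complete_graph k) (complement (complete_graph (n - k))))"
    using cM2_eq_bound_iff graph_iso_join_iff assms(7) by simp
  obtain \<epsilon> :: real where \<epsilon>: "372/1000 \<le> \<epsilon>" "\<epsilon> \<le> 392/1000"
    and profile_le: "zagreb_profile n k \<le> zagreb_profile n (\<epsilon> * n)"
  proof (rule zagreb_profile_le_scaled)
    show "11 \<le> real n"
      using assms(5) by simp
    show "real k \<le> real n - 1"
      using card_max_deg_verts_bounds(2) assms(7) by (simp add: nat_less_real_le)
  qed simp_all
  have "real_of_int (cM2 G) \<le> of_int (int k * (int n - int k) * ((int n - 1) ^ 2 - int k ^ 2))"
    using bound by (simp only: of_int_le_iff)
  also have "\<dots> = zagreb_profile n k"
    by (simp add: zagreb_profile_def)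
  also note profile_le
  also note zagreb_profile_scaled
  finally show ?thesis
    using bound extremal \<epsilon> by blast
qed

end
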